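(* For $n\ge 2$, let $Q_n$ be the $n$-dimensional hypercube graph and let $c_1(Q_n)$ be the largest invariant factor (the exponent) of its sandpile group $K(Q_n)$. Then $$v_2(c_1(Q_n))=\max\Big\{\max_{1\le x<n}\{v_2(x)+x\},\; v_2(n)+n-1\Big\}.$$
   Context: $Q_n$ is the graph with vertex set $\mathbb{F}_2^n$ in which $u,w$ are adjacent iff they differ in exactly one coordinate. Its Laplacian is $L=D-A$ ($D$ the degree matrix, $A$ the adjacency matrix), and $\operatorname{coker}(L:\mathbb{Z}^{2^n}\to\mathbb{Z}^{2^n})\cong\mathbb{Z}\oplus K(Q_n)$ with $K(Q_n)$ a finite abelian group (the sandpile group). $v_2(x)$ denotes the exponent of the largest power of $2$ dividing the integer $x$. *)

theory Defs
  imports Main "HOL-Computational_Algebra.Primes"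
begin

text \<open>Vertices of Q_n: elements of F_2^n, encoded as subsets of {0..<n}
  (indicator sets of the coordinates equal to 1).\<close>
definition cube_verts :: "nat \<Rightarrow> nat set set" where
  "cube_verts n = Pow {..<n}"

definition cube_adj :: "nat set \<Rightarrow> nat set \<Rightarrow> bool" where
  "cube_adj u w \<longleftrightarrow> card ((u - w) \<union> (w - u)) = 1"

definition cube_deg :: "nat \<Rightarrow> nat set \<Rightarrow> nat" where
  "cube_deg n u = card {w \<in> cube_verts n. cube_adj u w}"

definition zvecs :: "nat \<Rightarrow> (nat set \<Rightarrow> int) set" where
  "zvecs n = {f. \<forall>x. x \<notin> cube_verts n \<longrightarrow> f x = 0}"

definition cube_laplacian :: "nat \<Rightarrow> (nat set \<Rightarrow> int) \<Rightarrow> (nat set \<Rightarrow> int)" where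
  "cube_laplacian n f = (\<lambda>u. if u \<in> cube_verts n then
      int (cube_deg n u) * f u - (\<Sum>w\<in>{w \<in> cube_verts n. cube_adj u w}. f w) else 0)"

definition lap_image :: "nat \<Rightarrow> (nat set \<Rightarrow> int) set" where
  "lap_image n = cube_laplacian n ` zvecs n"

text \<open>Representatives of the torsion subgroup K(Q_n) of coker L.\<close>
definition sandpile_torsion :: "nat \<Rightarrow> (nat set \<Rightarrow> int) set" where
  "sandpile_torsion n = {v \<in> zvecs n. \<exists>k::int. k > 0 \<and> (\<lambda>u. k * v u) \<in> lap_image n}"

text \<open>Exponent of K(Q_n) (= its largest invariant factor c_1).\<close>
definition sandpile_exponent :: "nat \<Rightarrow> nat" where
  "sandpile_exponent n = (LEAST e::nat. e > 0 \<and>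
      (\<forall>v \<in> sandpile_torsion n. (\<lambda>u. int e * v u) \<in> lap_image n))"

end

theory Submission
  imports Defs "HOL-Computational_Algebra.Polynomial"
begin

(*
  The edge vectors e_a - e_(a+j) of Q_n generate all integer vectors of sum zero, so the
  exponent of K(Q_n) is the least e > 0 such that e times every edge vector lies in the image
  of L. For the edge from a to a + j there is an explicit rational solution of
  L psi = 2^n (e_a - e_(a+j)), invariant under the symmetries of Q_n fixing the edge:
  psi(x) = +-E(w), the sign given by x_j and w being the number of coordinates i /= j with
  x_i = a_i, where E(w) = integral from 0 to 1 of (2 - t)^w t^(n-1-w) dt. The Laplace equation
  for psi is a three-term recurrence for E, obtained by integrating a derivative. Since
  harmonic functions on Q_n are constant, e times the edge vector lies in the image of L iff
  all differences e (psi(x) - psi(y)) / 2^n are integers.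

  Expanding, n! E(w) = sum_i (w choose i) (-1)^(w-i) 2^i n!/(n-i), whose i-th term has 2-adic
  valuation v_2(2^n n!) - (v_2(n-i) + n - i). With F the right-hand side of the theorem, all
  differences of n! psi are therefore divisible by 2^(v_2(2^n n!) - F), and for a suitable pair
  of vertices by no higher power of 2. Hence 2^F times the odd part of n! annihilates K(Q_n),
  while every annihilator is divisible by 2^F.
*)

section \<open>Integration of polynomials over [0, 1]\<close>

definition integral01 :: "'a::field_char_0 poly \<Rightarrow> 'a" where
  "integral01 p = (\<Sum>k\<le>degree p. coeff p k / of_nat (Suc k))"

lemma integral01_eq_sum:
  assumes "degree p < K"
  shows "integral01 p = (\<Sum>k<K. coeff p k / of_nat (Suc k))"
  unfolding integral01_def
  by (rule sum.mono_neutral_left) (use assms in \<open>auto simp: coeff_eq_0\<close>)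

lemma integral01_add: "integral01 (p + q) = integral01 p + integral01 q"
proof -
  define K where "K = Suc (max (degree p) (degree q))"
  have "degree (p + q) < K" "degree p < K" "degree q < K"
    unfolding K_def using degree_add_le_max[of p q] by auto
  then show ?thesis
    by (simp add: integral01_eq_sum[of _ K] sum.distrib add_divide_distrib)
qed

lemma integral01_smult: "integral01 (smult c p) = c * integral01 p"
proof -
  have "degree (smult c p) < Suc (degree p)" "degree p < Suc (degree p)"
    using degree_smult_le[of c p] by auto
  then show ?thesis
    by (simp only: integral01_eq_sum[of _ "Suc (degree p)"] sum_distrib_left coeff_smult
        times_divide_eq_right)
qed

lemma integral01_minus: "integral01 (- p) = - integral01 p"
  using integral01_smult[of "-1" p] by simp

lemma integral01_diff: "integral01 (p - q) = integral01 p - integral01 q"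
  using integral01_add[of p "-q"] integral01_minus[of q] by simp

lemma integral01_sum: "integral01 (\<Sum>x\<in>A. f x) = (\<Sum>x\<in>A. integral01 (f x))"
  by (induction A rule: infinite_finite_induct) (simp_all add: integral01_add integral01_def[of 0])

lemma integral01_monom: "integral01 (monom c m) = c / of_nat (Suc m)"
proof -
  have "degree (monom c m) < Suc m"
    using degree_monom_le[of c m] by linarith
  then show ?thesis
    by (simp add: integral01_eq_sum lessThan_Suc)
qed

lemma integral01_pderiv: "integral01 (pderiv p) = poly p 1 - poly p 0"
proof -
  define d where "d = degree p"
  have "degree (pderiv p) < Suc d"
    unfolding d_def degree_pderiv by linarith
  then have "integral01 (pderiv p) = (\<Sum>k<Suc d. coeff p (Suc k))"
    by (simp add: integral01_eq_sum coeff_pderiv del: of_nat_Suc)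
  also have "\<dots> = (\<Sum>k<Suc (Suc d). coeff p k) - coeff p 0"
    by (subst sum.lessThan_Suc_shift) simp
  also have "\<dots> = (\<Sum>k<Suc d. coeff p k) - coeff p 0"
    by (simp add: d_def coeff_eq_0)
  also have "\<dots> = poly p 1 - poly p 0"
    by (simp add: poly_altdef d_def lessThan_Suc_atMost poly_0_coeff_0)
  finally show ?thesis .
qed

section \<open>The weights\<close>

lemma smult_of_nat_power_pred:
  "smult (of_nat k) (p ^ (k - 1) * p) = smult (of_nat k) (p ^ k)"
  by (cases k) (simp_all add: mult.commute)

lemma pderiv_weight_poly:
  fixes w m :: nat
  defines "p \<equiv> [:2, -1:] :: rat poly" and "q \<equiv> [:0, 1:] :: rat poly"
  shows "- pderiv ((p - q) * p ^ w * q ^ m) =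
    smult (of_nat (w + m + 2)) (p ^ w * q ^ m) - smult (of_nat w) (p ^ (w - 1) * q ^ Suc m)
      - smult (of_nat m) (p ^ Suc w * q ^ (m - 1))"
proof -
  have dp: "pderiv p = -1" and dq: "pderiv q = 1"
    by (simp_all add: p_def q_def pderiv_pCons one_pCons)
  have "- pderiv ((p - q) * p ^ w * q ^ m) =
      2 * (p ^ w * q ^ m) + smult (of_nat w) (p ^ (w - 1) * p) * q ^ m
      - smult (of_nat w) (p ^ (w - 1) * q ^ Suc m) - smult (of_nat m) (p ^ Suc w * q ^ (m - 1))
      + p ^ w * smult (of_nat m) (q ^ (m - 1) * q)"
    by (simp add: pderiv_mult pderiv_diff pderiv_power dp dq algebra_simps)
  then show ?thesis
    by (simp only: smult_of_nat_power_pred mult_smult_left mult_smult_right)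
      (simp add: numeral_mult_conv_smult smult_add_left algebra_simps power_Suc2
        del: power_Suc)
qed

definition edge_weight :: "nat \<Rightarrow> nat \<Rightarrow> rat" where
  "edge_weight n w = integral01 ([:2, -1:] ^ w * [:0, 1:] ^ (n - 1 - w))"

lemma edge_weight_recurrence:
  assumes "w < n"
  shows "of_nat (n + 1) * edge_weight n w - of_nat w * edge_weight n (w - 1)
           - of_nat (n - 1 - w) * edge_weight n (w + 1) = (if w = n - 1 then 2 ^ n else 0)"
proof -
  define p where "p = ([:2, -1:] :: rat poly)"
  define q where "q = ([:0, 1:] :: rat poly)"
  define m where "m = n - 1 - w"
  have mid: "edge_weight n w = integral01 (p ^ w * q ^ m)"
    by (simp add: edge_weight_def p_def q_def m_def)
  have left: "of_nat w * edge_weight n (w - 1) = of_nat w * integral01 (p ^ (w - 1) * q ^ Suc m)"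
    using assms by (cases w) (simp_all add: edge_weight_def p_def q_def m_def Suc_diff_Suc)
  have right: "edge_weight n (w + 1) = integral01 (p ^ Suc w * q ^ (m - 1))"
    by (simp add: edge_weight_def p_def q_def m_def)
  have "of_nat (n + 1) * edge_weight n w - of_nat w * edge_weight n (w - 1)
           - of_nat (n - 1 - w) * edge_weight n (w + 1)
      = of_nat (w + m + 2) * integral01 (p ^ w * q ^ m)
          - of_nat w * integral01 (p ^ (w - 1) * q ^ Suc m)
          - of_nat m * integral01 (p ^ Suc w * q ^ (m - 1))"
    using assms unfolding mid left right m_def by (simp add: Suc_diff_Suc)
  also have "\<dots> = integral01 (- pderiv ((p - q) * p ^ w * q ^ m))"
    unfolding p_def q_def pderiv_weight_poly integral01_diff integral01_smult ..
  also have "\<dots> = poly ((p - q) * p ^ w * q ^ m) 0 - poly ((p - q) * p ^ w * q ^ m) 1"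
    by (simp add: integral01_minus integral01_pderiv)
  also have "\<dots> = 2 ^ Suc w * 0 ^ m"
    by (simp add: p_def q_def)
  also have "\<dots> = (if w = n - 1 then 2 ^ n else 0)"
    using assms by (auto simp: m_def simp flip: power_Suc)
  finally show ?thesis .
qed

lemma edge_weight_closed_form:
  assumes "w < n"
  shows "edge_weight n w = (\<Sum>i\<le>w. of_nat (w choose i) * 2 ^ i * (-1) ^ (w - i) / of_nat (n - i))"
proof -
  define m where "m = n - 1 - w"
  have X_monom: "[:0, 1:] = (monom 1 1 :: rat poly)"
    and two_monom: "[:2:] = (monom 2 0 :: rat poly)"
    by (simp_all add: monom_Suc monom_0)
  have "([:2, -1:] :: rat poly) ^ w * [:0, 1:] ^ m
      = (\<Sum>i\<le>w. of_nat (w choose i) * [:2:] ^ i * (- [:0, 1:]) ^ (w - i)) * [:0, 1:] ^ m"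
    by (simp flip: binomial_ring)
  also have "\<dots> = (\<Sum>i\<le>w. monom (of_nat (w choose i) * 2 ^ i * (-1) ^ (w - i)) (w - i + m))"
    unfolding sum_distrib_right X_monom two_monom
    by (simp add: of_nat_monom monom_power mult_monom minus_monom)
  finally show ?thesis
    using assms by (simp add: edge_weight_def integral01_sum integral01_monom m_def Suc_diff_Suc)
qed

section \<open>The Laplacian of the hypercube\<close>

definition flip :: "nat \<Rightarrow> nat set \<Rightarrow> nat set" where
  "flip i x = (if i \<in> x then x - {i} else insert i x)"

lemma mem_flip: "k \<in> flip i x \<longleftrightarrow> (if k = i then i \<notin> x else k \<in> x)"
  by (auto simp: flip_def)

lemma flip_flip [simp]: "flip i (flip i x) = x"
  by (auto simp: flip_def)

lemma flip_in_cube_verts: "x \<in> cube_verts n \<Longrightarrow> i < n \<Longrightarrow> flip i x \<in> cube_verts n"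
  by (auto simp: flip_def cube_verts_def)

lemma inj_flip: "inj (\<lambda>i. flip i x)"
  by (rule injI) (metis mem_flip)

lemma cube_adj_iff_flip:
  assumes "x \<in> cube_verts n" "y \<in> cube_verts n"
  shows "cube_adj x y \<longleftrightarrow> (\<exists>i<n. y = flip i x)"
proof
  assume "cube_adj x y"
  then obtain i where i: "(x - y) \<union> (y - x) = {i}"
    unfolding cube_adj_def by (auto simp: card_1_singleton_iff)
  then have "i < n"
    using assms by (auto simp: cube_verts_def)
  moreover have "y = flip i x"
  proof (rule set_eqI)
    fix k
    have "k \<in> (x - y) \<union> (y - x) \<longleftrightarrow> k = i"
      using i by simp
    then show "k \<in> y \<longleftrightarrow> k \<in> flip i x"
      unfolding mem_flip by auto
  qed
  ultimately show "\<exists>i<n. y = flip i x"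
    by blast
next
  assume "\<exists>i<n. y = flip i x"
  then obtain i where "y = flip i x"
    by blast
  then have "(x - y) \<union> (y - x) = {i}"
    by (auto simp: flip_def)
  then show "cube_adj x y"
    by (simp add: cube_adj_def)
qed

lemma cube_neighbours_eq:
  assumes "x \<in> cube_verts n"
  shows "{y \<in> cube_verts n. cube_adj x y} = (\<lambda>i. flip i x) ` {..<n}"
  using cube_adj_iff_flip[OF assms] flip_in_cube_verts[OF assms] by auto

lemma cube_deg_eq: "x \<in> cube_verts n \<Longrightarrow> cube_deg n x = n"
  unfolding cube_deg_def cube_neighbours_eq by (simp add: card_image inj_on_subset[OF inj_flip])

definition flip_laplacian :: "nat \<Rightarrow> (nat set \<Rightarrow> 'a::ring_1) \<Rightarrow> nat set \<Rightarrow> 'a" where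
  "flip_laplacian n f x = of_nat n * f x - (\<Sum>i<n. f (flip i x))"

lemma cube_laplacian_eq_flip_laplacian:
  "cube_laplacian n z x = (if x \<in> cube_verts n then flip_laplacian n z x else 0)"
  by (simp add: cube_laplacian_def flip_laplacian_def cube_deg_eq cube_neighbours_eq
      sum.reindex[OF inj_on_subset[OF inj_flip]])

lemma of_int_flip_laplacian:
  "of_int (flip_laplacian n z x) = flip_laplacian n (\<lambda>y. of_int (z y)) x"
  by (simp add: flip_laplacian_def)

lemma of_int_cube_laplacian:
  "x \<in> cube_verts n \<Longrightarrow> of_int (cube_laplacian n z x) = flip_laplacian n (\<lambda>y. of_int (z y)) x"
  by (simp add: cube_laplacian_eq_flip_laplacian of_int_flip_laplacian)

lemma flip_laplacian_affine:
  fixes f :: "nat set \<Rightarrow> 'a::comm_ring_1"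
  shows "flip_laplacian n (\<lambda>x. c * f x + d) x = c * flip_laplacian n f x"
  by (simp add: flip_laplacian_def sum.distrib sum_distrib_left algebra_simps)

lemma flip_laplacian_diff:
  "flip_laplacian n (\<lambda>x. f x - g x) x = flip_laplacian n f x - flip_laplacian n g x"
  by (simp add: flip_laplacian_def sum_subtractf algebra_simps)

lemma flip_laplacian_cong:
  "x \<in> cube_verts n \<Longrightarrow> (\<And>y. y \<in> cube_verts n \<Longrightarrow> f y = g y) \<Longrightarrow>
    flip_laplacian n f x = flip_laplacian n g x"
  by (simp add: flip_laplacian_def flip_in_cube_verts)

lemma flip_closed_contains_cube_verts:
  assumes "x \<in> cube_verts n" "x \<in> S" and closed: "\<And>y i. y \<in> S \<Longrightarrow> i < n \<Longrightarrow> flip i y \<in> S"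
  shows "cube_verts n \<subseteq> S"
proof
  have reach: "(x - D) \<union> (D - x) \<in> S" if "finite D" "D \<subseteq> {..<n}" for D
    using that
  proof (induction D rule: finite_induct)
    case (insert i D)
    then have "flip i ((x - D) \<union> (D - x)) \<in> S"
      by (intro closed) auto
    moreover have "flip i ((x - D) \<union> (D - x)) = (x - insert i D) \<union> (insert i D - x)"
      using insert.hyps by (auto simp: flip_def)
    ultimately show ?case
      by simp
  qed (use assms in simp)
  fix y
  assume "y \<in> cube_verts n"
  with assms(1) have "(x - ((x - y) \<union> (y - x))) \<union> (((x - y) \<union> (y - x)) - x) \<in> S"
    by (intro reach) (auto simp: cube_verts_def intro: finite_subset)
  moreover have "(x - ((x - y) \<union> (y - x))) \<union> (((x - y) \<union> (y - x)) - x) = y"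
    by blast
  ultimately show "y \<in> S"
    by simp
qed

lemma flip_harmonic_imp_const:
  fixes f :: "nat set \<Rightarrow> 'a::linordered_idom"
  assumes harmonic: "\<And>x. x \<in> cube_verts n \<Longrightarrow> flip_laplacian n f x = 0"
    and "x \<in> cube_verts n" "y \<in> cube_verts n"
  shows "f x = f y"
proof -
  define M where "M = Max (f ` cube_verts n)"
  define S where "S = {x \<in> cube_verts n. f x = M}"
  have le_M: "f x \<le> M" if "x \<in> cube_verts n" for x
    unfolding M_def using that by (simp add: cube_verts_def)
  have "M \<in> f ` cube_verts n"
    unfolding M_def by (intro Max_in) (auto simp: cube_verts_def)
  then obtain x0 where x0: "x0 \<in> cube_verts n" "x0 \<in> S"
    by (auto simp: S_def)
  have "flip i x \<in> S" if "x \<in> S" "i < n" for x i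
  proof -
    have x: "x \<in> cube_verts n" "f x = M"
      using \<open>x \<in> S\<close> by (auto simp: S_def)
    then have "(\<Sum>i<n. M - f (flip i x)) = 0"
      using harmonic[OF x(1)] by (simp add: flip_laplacian_def sum_subtractf)
    moreover have "\<forall>i\<in>{..<n}. 0 \<le> M - f (flip i x)"
      using le_M flip_in_cube_verts[OF x(1)] by simp
    ultimately have "\<forall>i\<in>{..<n}. M - f (flip i x) = 0"
      by (subst (asm) sum_nonneg_eq_0_iff) auto
    then have "f (flip i x) = M"
      using \<open>i < n\<close> by simp
    then show ?thesis
      using flip_in_cube_verts[OF x(1) \<open>i < n\<close>] by (simp add: S_def)
  qed
  then have "cube_verts n \<subseteq> S"
    using flip_closed_contains_cube_verts[OF x0] by blast
  then show ?thesis
    using assms(2,3) by (auto simp: S_def)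
qed

lemma lap_image_add: "f \<in> lap_image n \<Longrightarrow> g \<in> lap_image n \<Longrightarrow> (\<lambda>u. f u + g u) \<in> lap_image n"
proof -
  assume "f \<in> lap_image n" "g \<in> lap_image n"
  then obtain y z
    where "y \<in> zvecs n" "z \<in> zvecs n" "f = cube_laplacian n y" "g = cube_laplacian n z"
    by (auto simp: lap_image_def)
  moreover have "cube_laplacian n (\<lambda>x. y x + z x) u = cube_laplacian n y u + cube_laplacian n z u"
    for u
    by (simp add: cube_laplacian_def sum.distrib algebra_simps)
  ultimately show ?thesis
    unfolding lap_image_def by (intro image_eqI[of _ _ "\<lambda>x. y x + z x"]) (auto simp: zvecs_def)
qed

lemma lap_image_scale: "f \<in> lap_image n \<Longrightarrow> (\<lambda>u. k * f u) \<in> lap_image n"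
proof -
  assume "f \<in> lap_image n"
  then obtain z where "z \<in> zvecs n" "f = cube_laplacian n z"
    by (auto simp: lap_image_def)
  moreover have "cube_laplacian n (\<lambda>x. k * z x) u = k * cube_laplacian n z u" for u
    by (simp add: cube_laplacian_def sum_distrib_left algebra_simps)
  ultimately show ?thesis
    unfolding lap_image_def by (intro image_eqI[of _ _ "\<lambda>x. k * z x"]) (auto simp: zvecs_def)
qed

lemma lap_image_zero: "(\<lambda>u. 0) \<in> lap_image n"
  using lap_image_scale[of "cube_laplacian n (\<lambda>x. 0)" n 0] by (auto simp: lap_image_def zvecs_def)

lemma lap_image_diff: "f \<in> lap_image n \<Longrightarrow> g \<in> lap_image n \<Longrightarrow> (\<lambda>u. f u - g u) \<in> lap_image n"
  using lap_image_add[of f n "\<lambda>u. - 1 * g u"] lap_image_scale[of g n "- 1"] by simp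

lemma lap_image_sum:
  "(\<And>x. x \<in> A \<Longrightarrow> f x \<in> lap_image n) \<Longrightarrow> (\<lambda>u. \<Sum>x\<in>A. f x u) \<in> lap_image n"
  by (induction A rule: infinite_finite_induct) (simp_all add: lap_image_zero lap_image_add)

lemma sum_cube_laplacian: "(\<Sum>x\<in>cube_verts n. cube_laplacian n z x) = 0"
proof -
  have flip_sum: "(\<Sum>x\<in>cube_verts n. z (flip i x)) = (\<Sum>x\<in>cube_verts n. z x)" if "i < n" for i
    by (rule sum.reindex_bij_witness[of _ "flip i" "flip i"]) (use that flip_in_cube_verts in auto)
  have "(\<Sum>x\<in>cube_verts n. cube_laplacian n z x) = (\<Sum>x\<in>cube_verts n. flip_laplacian n z x)"
    by (simp add: cube_laplacian_eq_flip_laplacian)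
  also have "\<dots> = 0"
    by (simp add: flip_laplacian_def sum_subtractf sum_distrib_left flip_sum
        sum.swap[of _ "{..<n}"])
  finally show ?thesis .
qed

section \<open>Edge potentials\<close>

definition agreement_set :: "nat \<Rightarrow> nat set \<Rightarrow> nat \<Rightarrow> nat set \<Rightarrow> nat set" where
  "agreement_set n a j x = {i \<in> {..<n} - {j}. (i \<in> x) = (i \<in> a)}"

definition edge_potential :: "nat \<Rightarrow> nat set \<Rightarrow> nat \<Rightarrow> nat set \<Rightarrow> rat" where
  "edge_potential n a j x =
    (if j \<in> x then -1 else 1) * edge_weight n (card (agreement_set n a j x))"

definition edge_vec :: "nat set \<Rightarrow> nat \<Rightarrow> nat set \<Rightarrow> int" where
  "edge_vec a j x = (if x = a then 1 else if x = insert j a then -1 else 0)"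

lemma card_agreement_set_less: "j < n \<Longrightarrow> card (agreement_set n a j x) < n"
proof -
  assume "j < n"
  have "card (agreement_set n a j x) \<le> card ({..<n} - {j})"
    unfolding agreement_set_def by (rule card_mono) auto
  then show ?thesis
    using \<open>j < n\<close> by simp
qed

lemma flip_laplacian_edge_potential:
  assumes a: "a \<subseteq> {..<n}" and j: "j < n" "j \<notin> a" and x: "x \<in> cube_verts n"
  shows "flip_laplacian n (edge_potential n a j) x = 2 ^ n * of_int (edge_vec a j x)"
proof -
  define A where "A = agreement_set n a j x"
  define D where "D = {i \<in> {..<n} - {j}. (i \<in> x) \<noteq> (i \<in> a)}"
  define w where "w = card A"
  define s :: rat where "s = (if j \<in> x then -1 else 1)"
  have fin: "finite A" "finite D"
    by (auto simp: A_def D_def agreement_set_def)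
  have partition: "{..<n} = insert j (A \<union> D)" "A \<inter> D = {}" "j \<notin> A \<union> D"
    using j by (auto simp: A_def D_def agreement_set_def)
  have "n = Suc (w + card D)"
    using arg_cong[OF partition(1), of card] partition(2,3) fin
    by (simp add: card_Un_disjoint w_def)
  then have w_less: "w < n" and card_D: "card D = n - 1 - w"
    by simp_all
  have "agreement_set n a j (flip j x) = A"
    by (auto simp: A_def agreement_set_def mem_flip)
  then have flip_j: "edge_potential n a j (flip j x) = - s * edge_weight n w"
    by (simp add: edge_potential_def s_def w_def mem_flip)
  have flip_A: "edge_potential n a j (flip i x) = s * edge_weight n (w - 1)" if "i \<in> A" for i
  proof -
    have "agreement_set n a j (flip i x) = A - {i}" "j \<in> flip i x \<longleftrightarrow> j \<in> x"
      using that by (auto simp: A_def agreement_set_def mem_flip)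
    then show ?thesis
      using that fin by (simp add: edge_potential_def s_def w_def)
  qed
  have flip_D: "edge_potential n a j (flip i x) = s * edge_weight n (w + 1)" if "i \<in> D" for i
  proof -
    have "agreement_set n a j (flip i x) = insert i A" "j \<in> flip i x \<longleftrightarrow> j \<in> x" "i \<notin> A"
      using that by (auto simp: A_def D_def agreement_set_def mem_flip)
    then show ?thesis
      using fin by (simp add: edge_potential_def s_def w_def)
  qed
  have "(\<Sum>i<n. edge_potential n a j (flip i x))
      = s * (- edge_weight n w + of_nat w * edge_weight n (w - 1)
              + of_nat (n - 1 - w) * edge_weight n (w + 1))"
    unfolding partition(1) using fin partition(2,3)
    by (simp add: sum.union_disjoint flip_j flip_A flip_D card_D w_def algebra_simps)
  then have "flip_laplacian n (edge_potential n a j) x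
      = s * (of_nat (n + 1) * edge_weight n w - of_nat w * edge_weight n (w - 1)
              - of_nat (n - 1 - w) * edge_weight n (w + 1))"
    by (simp add: flip_laplacian_def edge_potential_def s_def w_def A_def algebra_simps)
  also have "\<dots> = s * (if w = n - 1 then 2 ^ n else 0)"
    using edge_weight_recurrence[OF w_less] by simp
  also have "w = n - 1 \<longleftrightarrow> x = a \<or> x = insert j a"
  proof
    assume "w = n - 1"
    then have "D = {}"
      using card_D fin by simp
    then show "x = a \<or> x = insert j a"
      using x a j by (auto simp: D_def cube_verts_def)
  next
    assume "x = a \<or> x = insert j a"
    then have "D = {}"
      by (auto simp: D_def)
    then show "w = n - 1"
      using card_D w_less by simp
  qed
  finally show ?thesis
    using j by (auto simp: s_def edge_vec_def)
qed

lemma flip_laplacian_scaled_edge_potential: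
  assumes "a \<subseteq> {..<n}" "j < n" "j \<notin> a" "x \<in> cube_verts n"
  shows "flip_laplacian n (\<lambda>y. of_int e / 2 ^ n * edge_potential n a j y + d) x
    = of_int (e * edge_vec a j x)"
  by (simp only: flip_laplacian_affine flip_laplacian_edge_potential[OF assms]) simp

lemma scaled_edge_potential_diff_in_Ints:
  assumes edge: "a \<subseteq> {..<n}" "j < n" "j \<notin> a"
    and image: "(\<lambda>u. e * edge_vec a j u) \<in> lap_image n"
    and "x \<in> cube_verts n" "y \<in> cube_verts n"
  shows "of_int e * (edge_potential n a j x - edge_potential n a j y) / 2 ^ n \<in> \<int>"
proof -
  obtain z where z: "cube_laplacian n z = (\<lambda>u. e * edge_vec a j u)"
    using image by (auto simp: lap_image_def)
  define h where "h x = of_int (z x) - (of_int e / 2 ^ n * edge_potential n a j x + 0)" for x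
  have "flip_laplacian n h x = 0" if "x \<in> cube_verts n" for x
  proof -
    have "(of_int (cube_laplacian n z x) :: rat) = flip_laplacian n (\<lambda>y. of_int (z y)) x"
      by (rule of_int_cube_laplacian[OF that])
    moreover have "flip_laplacian n (\<lambda>y. of_int e / 2 ^ n * edge_potential n a j y + 0) x
        = of_int (e * edge_vec a j x)"
      by (rule flip_laplacian_scaled_edge_potential[OF edge that])
    ultimately show ?thesis
      unfolding h_def flip_laplacian_diff z by simp
  qed
  then have "h x = h y"
    using flip_harmonic_imp_const assms(5,6) by blast
  then have "of_int e * (edge_potential n a j x - edge_potential n a j y) / 2 ^ n
      = of_int (z x - z y)"
    unfolding h_def by (simp add: field_simps)
  then show ?thesis
    by simp
qed

lemma edge_vec_in_lap_image_if_Ints: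
  assumes edge: "a \<subseteq> {..<n}" "j < n" "j \<notin> a"
    and ints: "\<And>x. x \<in> cube_verts n \<Longrightarrow>
      of_int e * (edge_potential n a j x - edge_potential n a j {}) / 2 ^ n \<in> \<int>"
  shows "(\<lambda>u. e * edge_vec a j u) \<in> lap_image n"
proof -
  define g where "g x = of_int e / 2 ^ n * edge_potential n a j x
      + - (of_int e / 2 ^ n * edge_potential n a j {})" for x
  define z where "z x = (if x \<in> cube_verts n then \<lfloor>g x\<rfloor> else 0)" for x
  have z_eq: "of_int (z x) = g x" if "x \<in> cube_verts n" for x
    using ints[OF that] unfolding z_def g_def by (simp add: that field_simps)
  have "cube_laplacian n z x = e * edge_vec a j x" for x
  proof (cases "x \<in> cube_verts n")
    case False
    moreover have "a \<in> cube_verts n" "insert j a \<in> cube_verts n"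
      using edge by (auto simp: cube_verts_def)
    ultimately show ?thesis
      by (auto simp: cube_laplacian_def edge_vec_def)
  next
    case True
    have "(of_int (cube_laplacian n z x) :: rat) = flip_laplacian n g x"
      unfolding of_int_cube_laplacian[OF True]
      by (rule flip_laplacian_cong[OF True]) (simp add: z_eq)
    also have "\<dots> = of_int (e * edge_vec a j x)"
      unfolding g_def by (rule flip_laplacian_scaled_edge_potential[OF edge True])
    finally show ?thesis
      by (simp only: of_int_eq_iff)
  qed
  moreover have "z \<in> zvecs n"
    by (simp add: z_def zvecs_def)
  ultimately show ?thesis
    unfolding lap_image_def by (metis image_eqI ext)
qed

section \<open>Annihilators of the sandpile group\<close>

lemma sum_sandpile_torsion: "v \<in> sandpile_torsion n \<Longrightarrow> (\<Sum>x\<in>cube_verts n. v x) = 0"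
proof -
  assume "v \<in> sandpile_torsion n"
  then obtain k :: int and z where "k > 0" "(\<lambda>u. k * v u) = cube_laplacian n z"
    by (auto simp: sandpile_torsion_def lap_image_def)
  then have "k * (\<Sum>x\<in>cube_verts n. v x) = 0"
    using sum_cube_laplacian[of n z] by (simp add: sum_distrib_left fun_eq_iff)
  then show ?thesis
    using \<open>k > 0\<close> by simp
qed

lemma lap_image_vertex_diff:
  assumes edges: "\<And>a j. a \<subseteq> {..<n} \<Longrightarrow> j < n \<Longrightarrow> j \<notin> a \<Longrightarrow> (\<lambda>u. e * edge_vec a j u) \<in> lap_image n"
    and "finite x" "x \<subseteq> {..<n}"
  shows "(\<lambda>u. e * (of_bool (u = x) - of_bool (u = {}))) \<in> lap_image n"
  using assms(2,3)
proof (induction x rule: finite_induct)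
  case empty
  then show ?case
    by (simp add: lap_image_zero)
next
  case (insert i x)
  then have "(\<lambda>u. e * (of_bool (u = x) - of_bool (u = {})) - e * edge_vec x i u) \<in> lap_image n"
    by (intro lap_image_diff edges) auto
  moreover have "e * (of_bool (u = x) - of_bool (u = {})) - e * edge_vec x i u
      = e * (of_bool (u = insert i x) - of_bool (u = {}))" for u
    using insert.hyps by (auto simp: edge_vec_def)
  ultimately show ?case
    by simp
qed

lemma lap_image_if_edge_vecs:
  assumes edges: "\<And>a j. a \<subseteq> {..<n} \<Longrightarrow> j < n \<Longrightarrow> j \<notin> a \<Longrightarrow> (\<lambda>u. e * edge_vec a j u) \<in> lap_image n"
    and v: "v \<in> zvecs n" "(\<Sum>x\<in>cube_verts n. v x) = 0"
  shows "(\<lambda>u. e * v u) \<in> lap_image n"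
proof -
  have "(\<lambda>u. \<Sum>x\<in>cube_verts n. v x * (e * (of_bool (u = x) - of_bool (u = {})))) \<in> lap_image n"
  proof (rule lap_image_sum)
    fix x
    assume "x \<in> cube_verts n"
    then have "(\<lambda>u. e * (of_bool (u = x) - of_bool (u = {}))) \<in> lap_image n"
      by (intro lap_image_vertex_diff[OF edges]) (auto simp: cube_verts_def intro: finite_subset)
    then show "(\<lambda>u. v x * (e * (of_bool (u = x) - of_bool (u = {})))) \<in> lap_image n"
      by (rule lap_image_scale)
  qed
  moreover have "(\<Sum>x\<in>cube_verts n. v x * (e * (of_bool (u = x) - of_bool (u = {})))) = e * v u"
    for u
  proof -
    have "(\<Sum>x\<in>cube_verts n. v x * (e * (of_bool (u = x) - of_bool (u = {}))))
        = e * ((\<Sum>x\<in>cube_verts n. v x * of_bool (u = x))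
               - (\<Sum>x\<in>cube_verts n. v x) * of_bool (u = {}))"
      by (simp add: sum_distrib_left sum_distrib_right sum_subtractf algebra_simps)
    also have "(\<Sum>x\<in>cube_verts n. v x * of_bool (u = x))
        = (\<Sum>x\<in>cube_verts n. if x = u then v u else 0)"
      by (rule sum.cong) auto
    also have "\<dots> = v u"
      using v(1) by (simp add: zvecs_def cube_verts_def)
    finally show ?thesis
      using v(2) by simp
  qed
  ultimately show ?thesis
    by simp
qed

definition annihilates :: "nat \<Rightarrow> int \<Rightarrow> bool" where
  "annihilates n e \<longleftrightarrow> (\<forall>v\<in>sandpile_torsion n. (\<lambda>u. e * v u) \<in> lap_image n)"

lemma annihilates_if_edge_vecs:
  assumes "\<And>a j. a \<subseteq> {..<n} \<Longrightarrow> j < n \<Longrightarrow> j \<notin> a \<Longrightarrow> (\<lambda>u. e * edge_vec a j u) \<in> lap_image n"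
  shows "annihilates n e"
  unfolding annihilates_def
proof
  fix v
  assume v: "v \<in> sandpile_torsion n"
  then have "v \<in> zvecs n"
    by (simp add: sandpile_torsion_def)
  then show "(\<lambda>u. e * v u) \<in> lap_image n"
    using lap_image_if_edge_vecs[OF assms _ sum_sandpile_torsion[OF v]] by blast
qed

lemma annihilates_lincomb:
  assumes "annihilates n a" "annihilates n b"
  shows "annihilates n (k * a + l * b)"
  unfolding annihilates_def
proof
  fix v
  assume "v \<in> sandpile_torsion n"
  then have "(\<lambda>u. a * v u) \<in> lap_image n" "(\<lambda>u. b * v u) \<in> lap_image n"
    using assms unfolding annihilates_def by auto
  then have "(\<lambda>u. k * (a * v u) + l * (b * v u)) \<in> lap_image n"
    by (intro lap_image_add lap_image_scale[of "\<lambda>u. a * v u"] lap_image_scale[of "\<lambda>u. b * v u"])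
  then show "(\<lambda>u. (k * a + l * b) * v u) \<in> lap_image n"
    by (simp add: algebra_simps)
qed

lemma sandpile_exponent_eq_Least:
  "sandpile_exponent n = (LEAST e. 0 < e \<and> annihilates n (int e))"
  unfolding sandpile_exponent_def annihilates_def ..

lemma sandpile_exponent_annihilates:
  assumes "0 < K" "annihilates n (int K)"
  shows "0 < sandpile_exponent n" "annihilates n (int (sandpile_exponent n))"
proof -
  have "0 < sandpile_exponent n \<and> annihilates n (int (sandpile_exponent n))"
    unfolding sandpile_exponent_eq_Least by (rule LeastI[of _ K]) (use assms in simp)
  then show "0 < sandpile_exponent n" "annihilates n (int (sandpile_exponent n))"
    by simp_all
qed

lemma sandpile_exponent_dvd:
  assumes "0 < K" "annihilates n (int K)"
  shows "sandpile_exponent n dvd K"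
proof -
  let ?e = "sandpile_exponent n"
  note e = sandpile_exponent_annihilates[OF assms]
  define r where "r = K mod ?e"
  have "int K = int (K div ?e) * int ?e + int r"
    by (simp add: r_def flip: of_nat_mult of_nat_add)
  then have "int r = 1 * int K + (- int (K div ?e)) * int ?e"
    by simp
  then have "annihilates n (int r)"
    using annihilates_lincomb[OF assms(2) e(2)] by metis
  moreover have "r < ?e"
    using e(1) by (simp add: r_def)
  ultimately have "r = 0"
    using not_less_Least[of r "\<lambda>e. 0 < e \<and> annihilates n (int e)"]
    by (auto simp: sandpile_exponent_eq_Least)
  then show ?thesis
    by (simp add: r_def mod_0_imp_dvd)
qed

section \<open>2-adic valuations of the weights\<close>

lemma prime_power_dvd_factor:
  fixes p :: "'a::factorial_semiring"
  assumes "prime p" "p ^ L dvd e * x" "\<not> p ^ (L + 1) dvd p ^ F * x"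
  shows "p ^ F dvd e"
proof (cases "e = 0")
  case False
  have "x \<noteq> 0"
    using assms(3) by auto
  have "L \<le> multiplicity p e + multiplicity p x"
    using assms(1,2) False \<open>x \<noteq> 0\<close>
    by (simp add: power_dvd_iff_le_multiplicity prime_elem_multiplicity_mult_distrib)
  moreover have "\<not> L + 1 \<le> multiplicity p (p ^ F * x)"
    using assms(1,3) \<open>x \<noteq> 0\<close> by (subst (asm) power_dvd_iff_le_multiplicity) auto
  then have "F + multiplicity p x < L + 1"
    using assms(1) \<open>x \<noteq> 0\<close> by (simp add: prime_elem_multiplicity_mult_distrib)
  ultimately show ?thesis
    by (intro multiplicity_dvd') linarith
qed simp

lemma two_pow_dvd_of_nat_iff: "(2::int) ^ m dvd int x \<longleftrightarrow> 2 ^ m dvd x"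
  by (metis of_nat_dvd_iff of_nat_numeral of_nat_power)

definition weight_term :: "nat \<Rightarrow> nat \<Rightarrow> nat" where
  "weight_term n i = 2 ^ i * (fact n div (n - i))"

definition weight_numerator :: "nat \<Rightarrow> nat \<Rightarrow> int" where
  "weight_numerator n w = (\<Sum>i\<le>w. of_nat (w choose i) * (-1) ^ (w - i) * int (weight_term n i))"

definition denominator_v2 :: "nat \<Rightarrow> nat" where
  "denominator_v2 n = multiplicity (2::nat) (fact n) + n"

lemma fact_eq_mult_fact_div: "i < n \<Longrightarrow> fact n = (n - i) * (fact n div (n - i))"
  by (simp add: dvd_fact)

lemma fact_mult_edge_weight:
  assumes "w < n"
  shows "fact n * edge_weight n w = of_int (weight_numerator n w)"
proof -
  have "fact n * (of_nat (w choose i) * 2 ^ i * (-1) ^ (w - i) / of_nat (n - i))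
      = (of_int (of_nat (w choose i) * (-1) ^ (w - i) * int (weight_term n i)) :: rat)"
    if "i \<le> w" for i
  proof -
    have "i < n" "(of_nat (n - i) :: rat) \<noteq> 0"
      using that assms by simp_all
    then have "(fact n :: rat) = of_nat (n - i) * of_nat (fact n div (n - i))"
      by (metis fact_eq_mult_fact_div of_nat_fact of_nat_mult)
    then show ?thesis
      using \<open>of_nat (n - i) \<noteq> 0\<close> by (simp add: weight_term_def)
  qed
  then show ?thesis
    by (simp add: edge_weight_closed_form[OF assms] weight_numerator_def sum_distrib_left)
qed

lemma two_pow_dvd_weight_term_iff:
  assumes "i < n"
  shows "(2::int) ^ m dvd 2 ^ c * int (weight_term n i) \<longleftrightarrow>
    m + multiplicity (2::nat) (n - i) + (n - i) \<le> c + denominator_v2 n"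
proof -
  define q where "q = fact n div (n - i)"
  have q: "fact n = (n - i) * q"
    using fact_eq_mult_fact_div[OF assms] by (simp add: q_def)
  then have "q \<noteq> 0"
    by (metis fact_nonzero mult_0_right)
  have v_fact: "multiplicity 2 (fact n :: nat) = multiplicity 2 (n - i) + multiplicity 2 q"
    unfolding q using assms \<open>q \<noteq> 0\<close> by (simp add: prime_elem_multiplicity_mult_distrib)
  have "2 ^ c * int (weight_term n i) = int (2 ^ (c + i) * q)"
    by (simp add: weight_term_def q_def power_add)
  then have "(2::int) ^ m dvd 2 ^ c * int (weight_term n i) \<longleftrightarrow> 2 ^ m dvd 2 ^ (c + i) * q"
    by (simp only: two_pow_dvd_of_nat_iff)
  also have "\<dots> \<longleftrightarrow> m \<le> c + i + multiplicity 2 q"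
    using \<open>q \<noteq> 0\<close> by (simp add: power_dvd_iff_le_multiplicity prime_elem_multiplicity_mult_distrib)
  finally show ?thesis
    using v_fact assms unfolding denominator_v2_def by linarith
qed

definition exponent_v2 :: "nat \<Rightarrow> nat" where
  "exponent_v2 n = max (Max {multiplicity (2::nat) x + x | x. 1 \<le> x \<and> x < n})
                       (multiplicity (2::nat) n + n - 1)"

lemma finite_v2_shifts: "finite {multiplicity (2::nat) x + x | x. 1 \<le> x \<and> x < n}"
  by (rule finite_subset[of _ "(\<lambda>x. multiplicity 2 x + x) ` {..<n}"]) auto

lemma le_exponent_v2: "1 \<le> x \<Longrightarrow> x < n \<Longrightarrow> multiplicity (2::nat) x + x \<le> exponent_v2 n"
  unfolding exponent_v2_def using finite_v2_shifts[of n] by (auto intro!: max.coboundedI1 Max_ge)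

lemma le_exponent_v2_endpoint: "multiplicity (2::nat) n + n - 1 \<le> exponent_v2 n"
  by (simp add: exponent_v2_def)

lemma exponent_v2_cases:
  assumes "2 \<le> n"
  obtains "exponent_v2 n = multiplicity (2::nat) n + n - 1"
    | x where "1 \<le> x" "x < n" "multiplicity (2::nat) x + x = exponent_v2 n"
      "multiplicity (2::nat) n + n - 1 < exponent_v2 n"
proof -
  let ?S = "{multiplicity (2::nat) x + x | x. 1 \<le> x \<and> x < n}"
  have "Max ?S \<in> ?S"
    using assms by (intro Max_in finite_v2_shifts) auto
  then obtain x where x: "1 \<le> x" "x < n" "Max ?S = multiplicity 2 x + x"
    by auto
  show ?thesis
  proof (cases "multiplicity (2::nat) n + n - 1 < exponent_v2 n")
    case True
    then have "multiplicity 2 x + x = exponent_v2 n"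
      using x(3) by (simp add: exponent_v2_def max_def split: if_splits)
    then show ?thesis
      using that(2) x True by blast
  next
    case False
    then show ?thesis
      using that(1) le_exponent_v2_endpoint[of n] by simp
  qed
qed

lemma weight_numerator_diff:
  "weight_numerator n w - weight_numerator n 0 =
    (\<Sum>i\<in>{1..w}. of_nat (w choose i) * (-1) ^ (w - i) * int (weight_term n i))
      - of_bool (odd w) * (2 * int (weight_term n 0))"
proof -
  have "{..w} = insert 0 {1..w}"
    by auto
  then show ?thesis
    by (simp add: weight_numerator_def)
qed

lemma two_pow_dvd_weight_numerator_diff:
  assumes "w < n"
  shows "(2::int) ^ denominator_v2 n
           dvd 2 ^ exponent_v2 n * (weight_numerator n w - weight_numerator n 0)"
proof -
  let ?L = "denominator_v2 n" and ?F = "exponent_v2 n"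
  have "(2::int) ^ ?L dvd 2 ^ ?F * (of_nat (w choose i) * (-1) ^ (w - i) * int (weight_term n i))"
    if "i \<in> {1..w}" for i
  proof -
    have "i < n" "multiplicity (2::nat) (n - i) + (n - i) \<le> ?F"
      using that assms le_exponent_v2[of "n - i" n] by auto
    then have "(2::int) ^ ?L dvd 2 ^ ?F * int (weight_term n i)"
      by (subst two_pow_dvd_weight_term_iff) linarith+
    then show ?thesis
      by (metis dvd_mult mult.left_commute)
  qed
  moreover have "(2::int) ^ ?L dvd 2 ^ ?F * (of_bool (odd w) * (2 * int (weight_term n 0)))"
  proof -
    have "(2::int) ^ ?L dvd 2 ^ (?F + 1) * int (weight_term n 0)"
      using assms le_exponent_v2_endpoint[of n] by (subst two_pow_dvd_weight_term_iff) auto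
    then show ?thesis
      by (metis dvd_mult mult.left_commute mult.assoc power_Suc2 Suc_eq_plus1)
  qed
  ultimately show ?thesis
    unfolding weight_numerator_diff right_diff_distrib sum_distrib_left by (intro dvd_diff dvd_sum)
qed

lemma two_pow_dvd_double_weight_numerator:
  assumes "0 < n"
  shows "(2::int) ^ denominator_v2 n dvd 2 ^ exponent_v2 n * (2 * weight_numerator n 0)"
proof -
  have "(2::int) ^ denominator_v2 n dvd 2 ^ (exponent_v2 n + 1) * int (weight_term n 0)"
    using assms le_exponent_v2_endpoint[of n] by (subst two_pow_dvd_weight_term_iff) auto
  also have "2 ^ (exponent_v2 n + 1) * int (weight_term n 0)
      = 2 ^ exponent_v2 n * (2 * weight_numerator n 0)"
    by (simp add: weight_numerator_def)
  finally show ?thesis .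
qed

lemma two_pow_dvd_signed_weight_numerator_diff:
  assumes "w < n" "w' < n" "\<sigma> \<in> {1, -1}"
  shows "(2::int) ^ denominator_v2 n
           dvd 2 ^ exponent_v2 n * (\<sigma> * weight_numerator n w - weight_numerator n w')"
proof -
  let ?d = "\<lambda>w. 2 ^ exponent_v2 n * (weight_numerator n w - weight_numerator n 0)"
  have "2 ^ exponent_v2 n * (\<sigma> * weight_numerator n w - weight_numerator n w')
      = \<sigma> * ?d w - ?d w' + (\<sigma> - 1) div 2 * (2 ^ exponent_v2 n * (2 * weight_numerator n 0))"
    using assms(3) by (auto simp: algebra_simps)
  then show ?thesis
    using assms(1,2)
    by (simp add: two_pow_dvd_weight_numerator_diff two_pow_dvd_double_weight_numerator)
qed

lemma exists_weight_numerator_not_dvd: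
  assumes "2 \<le> n"
  obtains w \<sigma> where "w < n" "\<sigma> \<in> {1, -1}"
    "\<not> (2::int) ^ (denominator_v2 n + 1)
         dvd 2 ^ exponent_v2 n * (\<sigma> * weight_numerator n w - weight_numerator n 0)"
proof (cases rule: exponent_v2_cases[OF assms])
  case 1
  have "\<not> (2::int) ^ (denominator_v2 n + 1) dvd 2 ^ (exponent_v2 n + 1) * int (weight_term n 0)"
    using 1 assms by (subst two_pow_dvd_weight_term_iff) auto
  then show ?thesis
    using that[of 0 "-1"] assms by (simp add: weight_numerator_def mult.left_commute)
next
  case (2 x)
  let ?L = "denominator_v2 n" and ?F = "exponent_v2 n"
  let ?P = "\<lambda>k. 1 \<le> k \<and> k < n \<and> multiplicity (2::nat) (n - k) + (n - k) = ?F"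
  have "?P (n - x)"
    using 2 by simp
  then obtain k where k: "?P k" and below: "\<And>i. i < k \<Longrightarrow> \<not> ?P i"
    using exists_least_iff[of ?P] by blast
  \<comment> \<open>By minimality of \<open>k\<close>, the term \<open>i = k\<close> is the only one in
    \<open>weight_numerator n k - weight_numerator n 0\<close> not divisible by \<open>2 ^ (?L + 1)\<close>.\<close>
  have "(2::int) ^ (?L + 1)
      dvd 2 ^ ?F * (of_nat (k choose i) * (-1) ^ (k - i) * int (weight_term n i))"
    if "i \<in> {1..<k}" for i
  proof -
    have "i < n"
      using that k by simp
    moreover have "multiplicity (2::nat) (n - i) + (n - i) \<le> ?F"
      using that k by (intro le_exponent_v2) auto
    ultimately have "i < n" "multiplicity (2::nat) (n - i) + (n - i) < ?F"
      using that below[of i] by auto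
    then have "(2::int) ^ (?L + 1) dvd 2 ^ ?F * int (weight_term n i)"
      by (subst two_pow_dvd_weight_term_iff) linarith+
    then show ?thesis
      by (metis dvd_mult mult.left_commute)
  qed
  then have rest: "(2::int) ^ (?L + 1)
      dvd 2 ^ ?F * (\<Sum>i\<in>{1..<k}. of_nat (k choose i) * (-1) ^ (k - i) * int (weight_term n i))"
    unfolding sum_distrib_left by (rule dvd_sum)
  have "(2::int) ^ (?L + 1) dvd 2 ^ (?F + 1) * int (weight_term n 0)"
    using 2 by (subst two_pow_dvd_weight_term_iff) auto
  then have zero: "(2::int) ^ (?L + 1) dvd 2 ^ ?F * (of_bool (odd k) * (2 * int (weight_term n 0)))"
    by (metis dvd_mult mult.left_commute mult.assoc power_Suc2 Suc_eq_plus1)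
  have top: "\<not> (2::int) ^ (?L + 1) dvd 2 ^ ?F * int (weight_term n k)"
    using k by (subst two_pow_dvd_weight_term_iff) auto
  have "{1..k} = insert k {1..<k}"
    using k by auto
  then have "2 ^ ?F * (weight_numerator n k - weight_numerator n 0) = 2 ^ ?F * int (weight_term n k)
      + (2 ^ ?F * (\<Sum>i\<in>{1..<k}. of_nat (k choose i) * (-1) ^ (k - i) * int (weight_term n i))
         - 2 ^ ?F * (of_bool (odd k) * (2 * int (weight_term n 0))))"
    by (simp add: weight_numerator_diff algebra_simps)
  then have "\<not> (2::int) ^ (?L + 1) dvd 2 ^ ?F * (1 * weight_numerator n k - weight_numerator n 0)"
    using top rest zero by (simp add: dvd_add_left_iff)
  then show ?thesis
    using that[of k 1] k by simp
qed

section \<open>The exponent\<close>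

lemma of_int_divide_in_Ints_iff: "b \<noteq> 0 \<Longrightarrow> (of_int a / of_int b :: rat) \<in> \<int> \<longleftrightarrow> b dvd a"
proof
  assume "b \<noteq> 0" "(of_int a / of_int b :: rat) \<in> \<int>"
  then obtain c where "(of_int a / of_int b :: rat) = of_int c"
    by (auto elim: Ints_cases)
  then have "a = c * b"
    using \<open>b \<noteq> 0\<close> by (simp add: divide_eq_eq flip: of_int_mult of_int_eq_iff)
  then show "b dvd a"
    by simp
qed auto

lemma scaled_rat_in_Ints_iff:
  fixes q :: rat
  assumes "fact n * q = of_int x"
  shows "of_int e * q / 2 ^ n \<in> \<int> \<longleftrightarrow> fact n * 2 ^ n dvd e * x"
proof -
  have "of_int e * q / 2 ^ n = of_int (e * x) / of_int (fact n * 2 ^ n)"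
    using assms by (simp add: field_simps)
  also have "\<dots> \<in> \<int> \<longleftrightarrow> fact n * 2 ^ n dvd e * x"
    by (rule of_int_divide_in_Ints_iff) simp
  finally show ?thesis .
qed

lemma fact_mult_edge_potential:
  assumes "j < n"
  shows "fact n * edge_potential n a j x =
    of_int ((if j \<in> x then -1 else 1) * weight_numerator n (card (agreement_set n a j x)))"
  using fact_mult_edge_weight[OF card_agreement_set_less[OF assms]]
  by (simp add: edge_potential_def)

definition fact_odd_part :: "nat \<Rightarrow> nat" where
  "fact_odd_part n = fact n div 2 ^ multiplicity (2::nat) (fact n)"

lemma odd_fact_odd_part: "odd (fact_odd_part n)"
  unfolding fact_odd_part_def by (rule multiplicity_decompose) simp_all

lemma fact_odd_part_mult_two_pow: "int (fact_odd_part n) * 2 ^ denominator_v2 n = fact n * 2 ^ n"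
proof -
  have "fact n = fact_odd_part n * (2::nat) ^ multiplicity (2::nat) (fact n)"
    by (simp add: fact_odd_part_def multiplicity_dvd)
  from arg_cong[where f = "of_nat :: nat \<Rightarrow> int", OF this] show ?thesis
    by (simp add: denominator_v2_def power_add mult.assoc)
qed

definition annihilator :: "nat \<Rightarrow> nat" where
  "annihilator n = 2 ^ exponent_v2 n * fact_odd_part n"

lemma annihilator_pos: "0 < annihilator n"
  using odd_fact_odd_part[of n] by (auto simp: annihilator_def intro: odd_pos)

lemma multiplicity_annihilator: "multiplicity 2 (annihilator n) = exponent_v2 n"
  unfolding annihilator_def using odd_fact_odd_part[of n] by (auto intro: multiplicity_decomposeI)

lemma annihilator_edge_vec_in_lap_image:
  assumes edge: "a \<subseteq> {..<n}" "j < n" "j \<notin> a"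
  shows "(\<lambda>u. int (annihilator n) * edge_vec a j u) \<in> lap_image n"
proof (rule edge_vec_in_lap_image_if_Ints[OF edge])
  fix x
  define X where "X = (if j \<in> x then -1 else 1) * weight_numerator n (card (agreement_set n a j x))
      - weight_numerator n (card (agreement_set n a j {}))"
  have num: "fact n * (edge_potential n a j x - edge_potential n a j {}) = of_int X"
    unfolding right_diff_distrib fact_mult_edge_potential[OF edge(2)] X_def by simp
  have "(2::int) ^ denominator_v2 n dvd 2 ^ exponent_v2 n * X"
    unfolding X_def
    by (intro two_pow_dvd_signed_weight_numerator_diff card_agreement_set_less edge) auto
  then have "int (fact_odd_part n) * 2 ^ denominator_v2 n
      dvd int (fact_odd_part n) * (2 ^ exponent_v2 n * X)"
    by (rule mult_dvd_mono[OF dvd_refl])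
  moreover have "int (fact_odd_part n) * (2 ^ exponent_v2 n * X) = int (annihilator n) * X"
    by (simp add: annihilator_def)
  ultimately have "fact n * 2 ^ n dvd int (annihilator n) * X"
    by (simp only: fact_odd_part_mult_two_pow)
  then show
    "of_int (int (annihilator n)) * (edge_potential n a j x - edge_potential n a j {}) / 2 ^ n \<in> \<int>"
    using scaled_rat_in_Ints_iff[OF num] by blast
qed

lemma annihilates_annihilator: "annihilates n (int (annihilator n))"
  by (rule annihilates_if_edge_vecs) (rule annihilator_edge_vec_in_lap_image)

lemma edge_vec_in_sandpile_torsion:
  assumes edge: "a \<subseteq> {..<n}" "j < n" "j \<notin> a"
  shows "edge_vec a j \<in> sandpile_torsion n"
proof -
  have "edge_vec a j \<in> zvecs n"
    using edge by (auto simp: zvecs_def edge_vec_def cube_verts_def)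
  then show ?thesis
    using annihilator_edge_vec_in_lap_image[OF edge] annihilator_pos
    unfolding sandpile_torsion_def by (auto intro!: exI[of _ "int (annihilator n)"])
qed

lemma two_pow_exponent_v2_dvd_if_annihilates:
  assumes "2 \<le> n" "annihilates n (int e)"
  shows "2 ^ exponent_v2 n dvd e"
proof -
  define a where "a = {1..<n}"
  have edge: "a \<subseteq> {..<n}" "0 < n" "0 \<notin> a"
    using assms(1) by (auto simp: a_def)
  obtain w \<sigma> where w: "w < n" and \<sigma>: "\<sigma> \<in> {1, -1}" and not_dvd:
    "\<not> (2::int) ^ (denominator_v2 n + 1)
         dvd 2 ^ exponent_v2 n * (\<sigma> * weight_numerator n w - weight_numerator n 0)"
    using exists_weight_numerator_not_dvd[OF assms(1)] by blast
  define x where "x = (if \<sigma> = 1 then {1..w} else insert 0 {1..w})"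
  have x: "x \<in> cube_verts n" "agreement_set n a 0 x = {1..w}" "(if 0 \<in> x then -1 else 1) = \<sigma>"
    using w \<sigma> by (auto simp: x_def cube_verts_def agreement_set_def a_def)
  have empty: "{} \<in> cube_verts n" "agreement_set n a 0 {} = {}"
    by (auto simp: cube_verts_def agreement_set_def a_def)
  have "(\<lambda>u. int e * edge_vec a 0 u) \<in> lap_image n"
    using assms(2) edge_vec_in_sandpile_torsion[OF edge] by (simp add: annihilates_def)
  then have ints: "of_int (int e) * (edge_potential n a 0 x - edge_potential n a 0 {}) / 2 ^ n \<in> \<int>"
    by (rule scaled_edge_potential_diff_in_Ints[OF edge _ x(1) empty(1)])
  have "fact n * (edge_potential n a 0 x - edge_potential n a 0 {})
      = of_int (\<sigma> * weight_numerator n w - weight_numerator n 0)"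
    using x empty by (simp add: right_diff_distrib fact_mult_edge_potential[OF edge(2)])
  with ints have "fact n * 2 ^ n dvd int e * (\<sigma> * weight_numerator n w - weight_numerator n 0)"
    by (simp only: scaled_rat_in_Ints_iff)
  then have "(2::int) ^ denominator_v2 n
      dvd int e * (\<sigma> * weight_numerator n w - weight_numerator n 0)"
    by (rule dvd_trans[rotated]) (simp flip: fact_odd_part_mult_two_pow)
  then have "(2::int) ^ exponent_v2 n dvd int e"
    using not_dvd by (rule prime_power_dvd_factor[rotated]) simp
  then show ?thesis
    by (simp add: two_pow_dvd_of_nat_iff)
qed

theorem mainTheorem3:
  fixes n :: nat
  assumes "n \<ge> 2"
  shows "multiplicity (2::nat) (sandpile_exponent n) =
    max (Max {multiplicity (2::nat) x + x | x. 1 \<le> x \<and> x < n})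
        (multiplicity (2::nat) n + n - 1)"
proof -
  note exponent = sandpile_exponent_annihilates[OF annihilator_pos annihilates_annihilator]
  have "sandpile_exponent n dvd annihilator n"
    using annihilator_pos annihilates_annihilator by (rule sandpile_exponent_dvd)
  then have upper: "multiplicity 2 (sandpile_exponent n) \<le> exponent_v2 n"
    using annihilator_pos multiplicity_annihilator[of n]
      dvd_imp_multiplicity_le[of _ "annihilator n" 2] by simp
  have "2 ^ exponent_v2 n dvd sandpile_exponent n"
    using assms exponent(2) by (rule two_pow_exponent_v2_dvd_if_annihilates)
  then have lower: "exponent_v2 n \<le> multiplicity 2 (sandpile_exponent n)"
    using exponent(1) by (simp add: power_dvd_iff_le_multiplicity)
  from upper lower have "multiplicity 2 (sandpile_exponent n) = exponent_v2 n"
    by (rule antisym)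
  then show ?thesis
    unfolding exponent_v2_def .
qed

end
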